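(* There is a constant $C>0$ such that for all integers $n\ge 2$, $D\ge 1$ and $k$ with $0<k\le D$, there exist a deterministic distributed algorithm and, for every graph $G$ of size $n$ and diameter $D$, an advice assignment of size at most $C\,(1+(\log n)/k)$, under which the algorithm accomplishes labeled topology recognition in $G$ within time $D+k$.
   Context: Graphs are finite, simple, undirected, connected, with no node labels; at each node of degree $d$ the incident edges carry distinct port numbers $0,\dots,d-1$ (no coherence between endpoints). Isomorphism of such graphs is a bijection of nodes preserving edges and port numbers at both endpoints. Size = number of nodes; $\log$ is base 2. Communication model (LOCAL): synchronous rounds, all nodes start simultaneously; in each round every node may send arbitrary messages to all neighbours, receives their messages (knowing the arrival port), and performs arbitrary local computation. Initially a node knows only its degree and its advice. Advice: an oracle knowing the graph assigns each node a binary string; the size of advice is the maximum string length. All nodes run the same deterministic algorithm. Labeled topology recognition: all nodes output the same port-labeled graph $H$ with distinct node labels, and each node outputs its own label, such that there is an isomorphism from $G$ to $H$ mapping every node to the node of $H$ carrying the label it output. Time is the number of rounds until all nodes have output. *)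

theory Defs
  imports Complex_Main
begin

text \<open>A port-labeled graph is given by a finite node set V, a degree function deg and
  a neighbour function nb: for a node v and a port p < deg v, nb v p is the node
  reached through port p at v.  Simple (no loops, no multi-edges) and undirected.\<close>

type_synonym pgraph = "nat set \<times> (nat \<Rightarrow> nat) \<times> (nat \<Rightarrow> nat \<Rightarrow> nat)"

definition port_graph :: "nat set \<Rightarrow> (nat \<Rightarrow> nat) \<Rightarrow> (nat \<Rightarrow> nat \<Rightarrow> nat) \<Rightarrow> bool" where
  "port_graph V deg nb \<longleftrightarrow> finite V \<and>
     (\<forall>v\<in>V. \<forall>p<deg v. nb v p \<in> V \<and> nb v p \<noteq> v \<and>
                        (\<exists>q<deg (nb v p). nb (nb v p) q = v)) \<and>
     (\<forall>v\<in>V. inj_on (nb v) {..<deg v})"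

definition pg_adj :: "nat set \<Rightarrow> (nat \<Rightarrow> nat) \<Rightarrow> (nat \<Rightarrow> nat \<Rightarrow> nat) \<Rightarrow> nat \<Rightarrow> nat \<Rightarrow> bool" where
  "pg_adj V deg nb u v \<longleftrightarrow> u \<in> V \<and> (\<exists>p<deg u. nb u p = v)"

definition pg_path_le :: "nat set \<Rightarrow> (nat \<Rightarrow> nat) \<Rightarrow> (nat \<Rightarrow> nat \<Rightarrow> nat) \<Rightarrow> nat \<Rightarrow> nat \<Rightarrow> nat \<Rightarrow> bool" where
  "pg_path_le V deg nb u v t \<longleftrightarrow> (\<exists>xs. xs \<noteq> [] \<and> hd xs = u \<and> last xs = v \<and> set xs \<subseteq> V \<and>
      length xs \<le> Suc t \<and> (\<forall>i. Suc i < length xs \<longrightarrow> pg_adj V deg nb (xs ! i) (xs ! Suc i)))"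

definition pg_connected :: "nat set \<Rightarrow> (nat \<Rightarrow> nat) \<Rightarrow> (nat \<Rightarrow> nat \<Rightarrow> nat) \<Rightarrow> bool" where
  "pg_connected V deg nb \<longleftrightarrow> (\<forall>u\<in>V. \<forall>v\<in>V. \<exists>t. pg_path_le V deg nb u v t)"

definition pg_dist :: "nat set \<Rightarrow> (nat \<Rightarrow> nat) \<Rightarrow> (nat \<Rightarrow> nat \<Rightarrow> nat) \<Rightarrow> nat \<Rightarrow> nat \<Rightarrow> nat" where
  "pg_dist V deg nb u v = (LEAST t. pg_path_le V deg nb u v t)"

definition pg_diam :: "nat set \<Rightarrow> (nat \<Rightarrow> nat) \<Rightarrow> (nat \<Rightarrow> nat \<Rightarrow> nat) \<Rightarrow> nat" where
  "pg_diam V deg nb = Max {pg_dist V deg nb u v | u v. u \<in> V \<and> v \<in> V}"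

definition pg_iso :: "nat set \<Rightarrow> (nat \<Rightarrow> nat) \<Rightarrow> (nat \<Rightarrow> nat \<Rightarrow> nat) \<Rightarrow> pgraph \<Rightarrow> (nat \<Rightarrow> nat) \<Rightarrow> bool" where
  "pg_iso V deg nb H f \<longleftrightarrow> (case H of (W, deg', nb') \<Rightarrow>
      bij_betw f V W \<and> (\<forall>v\<in>V. deg' (f v) = deg v \<and> (\<forall>p<deg v. nb' (f v) p = f (nb v p))))"

text \<open>Two outputs describe the same port-labeled graph (ignoring junk values outside the node set).\<close>
definition pg_same :: "pgraph \<Rightarrow> pgraph \<Rightarrow> bool" where
  "pg_same H H' \<longleftrightarrow> (case H of (W, d, b) \<Rightarrow> case H' of (W', d', b') \<Rightarrow>
      W = W' \<and> (\<forall>v\<in>W. d v = d' v \<and> (\<forall>p<d v. b v p = b' v p)))"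

text \<open>A deterministic algorithm (the same at all nodes): initial state from degree and
  advice; the message sent on each port as a function of the state; state transition
  from the current state and the list of received messages indexed by arrival port;
  an optional output (graph H, own label).  States and messages are natural numbers
  (a countable universe suffices to encode arbitrary finite information).\<close>

record algorithm =
  init :: "nat \<Rightarrow> bool list \<Rightarrow> nat"
  send :: "nat \<Rightarrow> nat \<Rightarrow> nat"
  trans :: "nat \<Rightarrow> nat list \<Rightarrow> nat"
  outp :: "nat \<Rightarrow> (pgraph \<times> nat) option"

definition back_port :: "(nat \<Rightarrow> nat) \<Rightarrow> (nat \<Rightarrow> nat \<Rightarrow> nat) \<Rightarrow> nat \<Rightarrow> nat \<Rightarrow> nat" where
  "back_port deg nb v p = (THE q. q < deg (nb v p) \<and> nb (nb v p) q = v)"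

fun run :: "algorithm \<Rightarrow> (nat \<Rightarrow> nat) \<Rightarrow> (nat \<Rightarrow> nat \<Rightarrow> nat) \<Rightarrow> (nat \<Rightarrow> bool list) \<Rightarrow> nat \<Rightarrow> nat \<Rightarrow> nat" where
  "run A deg nb adv 0 v = init A (deg v) (adv v)"
| "run A deg nb adv (Suc t) v = trans A (run A deg nb adv t v)
     (map (\<lambda>p. send A (run A deg nb adv t (nb v p)) (back_port deg nb v p)) [0..<deg v])"

definition out_time :: "algorithm \<Rightarrow> (nat \<Rightarrow> nat) \<Rightarrow> (nat \<Rightarrow> nat \<Rightarrow> nat) \<Rightarrow> (nat \<Rightarrow> bool list) \<Rightarrow> nat \<Rightarrow> nat" where
  "out_time A deg nb adv v = (LEAST t. outp A (run A deg nb adv t v) \<noteq> None)"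

definition final_out :: "algorithm \<Rightarrow> (nat \<Rightarrow> nat) \<Rightarrow> (nat \<Rightarrow> nat \<Rightarrow> nat) \<Rightarrow> (nat \<Rightarrow> bool list) \<Rightarrow> nat \<Rightarrow> pgraph \<times> nat" where
  "final_out A deg nb adv v = the (outp A (run A deg nb adv (out_time A deg nb adv v) v))"

definition solves_ltr_within :: "algorithm \<Rightarrow> nat set \<Rightarrow> (nat \<Rightarrow> nat) \<Rightarrow> (nat \<Rightarrow> nat \<Rightarrow> nat) \<Rightarrow> (nat \<Rightarrow> bool list) \<Rightarrow> nat \<Rightarrow> bool" where
  "solves_ltr_within A V deg nb adv T \<longleftrightarrow>
     (\<forall>v\<in>V. \<exists>t\<le>T. outp A (run A deg nb adv t v) \<noteq> None) \<and>
     (\<exists>H f. (\<forall>v\<in>V. pg_same (fst (final_out A deg nb adv v)) H) \<and>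
            pg_iso V deg nb H f \<and>
            (\<forall>v\<in>V. f v = snd (final_out A deg nb adv v)))"

end

theory Submission
  imports Defs "HOL-Library.Countable"
begin

text \<open>Nodes exchange complete information, so after t rounds a node knows its view of depth t:
  the tree of degrees, port numbers and advice strings along all walks of length at most t.
  If the depth-K views are pairwise distinct, they can serve as node labels, and after
  D + K + 1 rounds every node reads off from its own view the labels of all nodes within
  distance D together with the labels of their neighbours, i.e. the whole labelled graph.

  The advice makes the depth-K views distinct, where K = k - 1 and s = K div 3.  Choose a
  maximal set of centres at pairwise distance more than 2s, and from each centre a geodesic
  of length s; its i-th node receives the i-th of s + 1 chunks of a \<open>\<lceil>log n\<rceil>\<close>-bit identifier
  of the centre, together with a centre flag and i mod 3.  Marked geodesics of distinct
  centres stay far apart, so the mod-3 counter lets the depth-s view of a centre retrace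
  its own geodesic and collect its identifier.  Every node is within 2s of a centre, so
  its depth-3s view contains the depth-s view of that centre, and a view determines the
  start node once it determines the endpoint of a walk, because return ports are part of
  the view.\<close>

fun walk :: "(nat \<Rightarrow> nat \<Rightarrow> nat) \<Rightarrow> nat \<Rightarrow> nat list \<Rightarrow> nat" where
  "walk nb u [] = u"
| "walk nb u (p # ps) = walk nb (nb u p) ps"

fun is_walk :: "(nat \<Rightarrow> nat) \<Rightarrow> (nat \<Rightarrow> nat \<Rightarrow> nat) \<Rightarrow> nat \<Rightarrow> nat list \<Rightarrow> bool" where
  "is_walk deg nb u [] = True"
| "is_walk deg nb u (p # ps) = (p < deg u \<and> is_walk deg nb (nb u p) ps)"

lemma walk_append [simp]: "walk nb u (ps @ qs) = walk nb (walk nb u ps) qs"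
  by (induction ps arbitrary: u) auto

lemma is_walk_append [simp]:
  "is_walk deg nb u (ps @ qs) \<longleftrightarrow> is_walk deg nb u ps \<and> is_walk deg nb (walk nb u ps) qs"
  by (induction ps arbitrary: u) auto

lemma is_walk_take: "is_walk deg nb u ps \<Longrightarrow> is_walk deg nb u (take i ps)"
  using is_walk_append[of deg nb u "take i ps" "drop i ps"] by simp

lemma binary_codes_exist:
  assumes "finite V" "card V \<le> 2 ^ l"
  shows "\<exists>ident :: nat \<Rightarrow> bool list. inj_on ident V \<and> (\<forall>v\<in>V. length (ident v) = l)"
proof -
  let ?B = "{xs :: bool list. set xs \<subseteq> UNIV \<and> length xs = l}"
  have "card ?B = 2 ^ l"
    using card_lists_length_eq[of "UNIV :: bool set" l] by (simp add: card_UNIV_bool)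
  moreover have "finite ?B" by (rule finite_lists_length_eq) simp
  ultimately obtain ident where "ident ` V \<subseteq> ?B" "inj_on ident V"
    using card_le_inj[OF assms(1), of ?B] assms(2) by auto
  then show ?thesis by blast
qed

lemma list_eq_by_chunks:
  assumes "length xs = Suc s * m" "length ys = Suc s * m"
    and "\<forall>i\<le>s. take m (drop (i * m) xs) = take m (drop (i * m) ys)"
  shows "xs = ys"
proof (rule nth_equalityI)
  show "length xs = length ys" using assms by simp
  fix j assume j: "j < length xs"
  then have "m > 0" using assms(1) by (cases m) auto
  define i r where "i = j div m" and "r = j mod m"
  have j_eq: "i * m + r = j" and r: "r < m" unfolding i_def r_def using \<open>m > 0\<close> by simp_all
  have "i < Suc s" unfolding i_def using j assms(1) by (simp add: less_mult_imp_div_less)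
  then have "take m (drop (i * m) xs) ! r = take m (drop (i * m) ys) ! r" using assms(3) by simp
  moreover have "i * m \<le> length xs" "i * m \<le> length ys" using j_eq j assms by linarith+
  ultimately show "xs ! j = ys ! j" using r j_eq by (simp add: nth_drop)
qed

locale connected_port_graph =
  fixes V :: "nat set" and deg :: "nat \<Rightarrow> nat" and nb :: "nat \<Rightarrow> nat \<Rightarrow> nat"
  assumes port_graph: "port_graph V deg nb" and connected: "pg_connected V deg nb"
begin

abbreviation gdist :: "nat \<Rightarrow> nat \<Rightarrow> nat" where
  "gdist u v \<equiv> pg_dist V deg nb u v"

lemma finite_V: "finite V"
  using port_graph unfolding port_graph_def by auto

lemma nb_in_V: "v \<in> V \<Longrightarrow> p < deg v \<Longrightarrow> nb v p \<in> V"
  using port_graph unfolding port_graph_def by auto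

lemma back_port:
  assumes "v \<in> V" "p < deg v"
  shows "back_port deg nb v p < deg (nb v p) \<and> nb (nb v p) (back_port deg nb v p) = v"
proof -
  let ?w = "nb v p"
  have "?w \<in> V" using nb_in_V assms by auto
  then have "inj_on (nb ?w) {..<deg ?w}" using port_graph unfolding port_graph_def by auto
  moreover obtain q where "q < deg ?w" "nb ?w q = v"
    using port_graph assms unfolding port_graph_def by blast
  ultimately have "\<exists>!q. q < deg ?w \<and> nb ?w q = v"
    by (metis inj_onD lessThan_iff)
  then show ?thesis unfolding back_port_def by (rule theI')
qed

lemma walk_in_V: "u \<in> V \<Longrightarrow> is_walk deg nb u ps \<Longrightarrow> walk nb u ps \<in> V"
  by (induction ps arbitrary: u) (auto simp: nb_in_V)

lemma path_to_walk:
  assumes "pg_path_le V deg nb u v t"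
  shows "\<exists>ps. is_walk deg nb u ps \<and> walk nb u ps = v \<and> length ps \<le> t"
proof -
  have "\<exists>ps. is_walk deg nb (hd xs) ps \<and> walk nb (hd xs) ps = last xs \<and> length ps = length xs - 1"
    if "xs \<noteq> []" "\<forall>i. Suc i < length xs \<longrightarrow> pg_adj V deg nb (xs ! i) (xs ! Suc i)" for xs
    using that
  proof (induction xs)
    case (Cons a xs)
    show ?case
    proof (cases "xs = []")
      case True then show ?thesis by (intro exI[of _ "[]"]) auto
    next
      case False
      have "pg_adj V deg nb a (hd xs)"
        using Cons.prems(2)[rule_format, of 0] False by (simp add: hd_conv_nth)
      then obtain p where p: "p < deg a" "nb a p = hd xs" unfolding pg_adj_def by auto
      have "\<forall>i. Suc i < length xs \<longrightarrow> pg_adj V deg nb (xs ! i) (xs ! Suc i)"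
        using Cons.prems(2) by (metis Suc_less_eq length_Cons nth_Cons_Suc)
      then obtain ps where "is_walk deg nb (hd xs) ps" "walk nb (hd xs) ps = last xs"
          "length ps = length xs - 1"
        using Cons.IH False by blast
      then show ?thesis using p False by (intro exI[of _ "p # ps"]) auto
    qed
  qed simp
  then show ?thesis using assms unfolding pg_path_le_def by fastforce
qed

lemma walk_to_path:
  "u \<in> V \<Longrightarrow> is_walk deg nb u ps \<Longrightarrow> pg_path_le V deg nb u (walk nb u ps) (length ps)"
proof (induction ps arbitrary: u)
  case Nil then show ?case unfolding pg_path_le_def by (intro exI[of _ "[u]"]) auto
next
  case (Cons p ps)
  have p: "nb u p \<in> V" "p < deg u" using Cons.prems nb_in_V by auto
  then obtain xs where xs: "xs \<noteq> []" "hd xs = nb u p" "last xs = walk nb (nb u p) ps" "set xs \<subseteq> V"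
      "length xs \<le> Suc (length ps)" "\<forall>i. Suc i < length xs \<longrightarrow> pg_adj V deg nb (xs ! i) (xs ! Suc i)"
    using Cons.IH[of "nb u p"] Cons.prems unfolding pg_path_le_def by auto
  have "pg_adj V deg nb ((u # xs) ! i) ((u # xs) ! Suc i)" if "Suc i < length (u # xs)" for i
  proof (cases i)
    case 0 then show ?thesis using xs p Cons.prems unfolding pg_adj_def by (auto simp: hd_conv_nth)
  next
    case (Suc j) then show ?thesis using xs(6) that by auto
  qed
  then show ?case unfolding pg_path_le_def using xs Cons.prems by (intro exI[of _ "u # xs"]) auto
qed

lemma gdist_walk_le: "u \<in> V \<Longrightarrow> is_walk deg nb u ps \<Longrightarrow> gdist u (walk nb u ps) \<le> length ps"
  unfolding pg_dist_def by (rule Least_le) (rule walk_to_path)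

lemma shortest_walk:
  assumes "u \<in> V" "v \<in> V"
  shows "\<exists>ps. is_walk deg nb u ps \<and> walk nb u ps = v \<and> length ps = gdist u v"
proof -
  obtain t where "pg_path_le V deg nb u v t" using connected assms unfolding pg_connected_def by blast
  then have "pg_path_le V deg nb u v (gdist u v)" unfolding pg_dist_def by (rule LeastI)
  then obtain ps where ps: "is_walk deg nb u ps" "walk nb u ps = v" "length ps \<le> gdist u v"
    using path_to_walk by blast
  moreover have "gdist u v \<le> length ps" using gdist_walk_le[OF assms(1) ps(1)] ps(2) by simp
  ultimately show ?thesis by (intro exI[of _ ps]) auto
qed

lemma gdist_triangle:
  assumes "a \<in> V" "b \<in> V" "c \<in> V"
  shows "gdist a c \<le> gdist a b + gdist b c"
proof -
  obtain ps where "is_walk deg nb a ps" "walk nb a ps = b" "length ps = gdist a b"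
    using shortest_walk assms by blast
  moreover obtain qs where "is_walk deg nb b qs" "walk nb b qs = c" "length qs = gdist b c"
    using shortest_walk assms by blast
  ultimately show ?thesis using gdist_walk_le[OF assms(1), of "ps @ qs"] by simp
qed

lemma reverse_walk:
  "u \<in> V \<Longrightarrow> is_walk deg nb u ps \<Longrightarrow>
   \<exists>qs. is_walk deg nb (walk nb u ps) qs \<and> walk nb (walk nb u ps) qs = u \<and> length qs = length ps"
proof (induction ps arbitrary: u)
  case Nil then show ?case by (intro exI[of _ "[]"]) auto
next
  case (Cons p ps)
  have p: "nb u p \<in> V" "p < deg u" using Cons.prems nb_in_V by auto
  obtain qs where "is_walk deg nb (walk nb (nb u p) ps) qs"
      "walk nb (walk nb (nb u p) ps) qs = nb u p" "length qs = length ps"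
    using Cons.IH[OF p(1)] Cons.prems by auto
  then show ?case using back_port[OF Cons.prems(1) p(2)]
    by (intro exI[of _ "qs @ [back_port deg nb u p]"]) auto
qed

lemma gdist_sym: assumes "a \<in> V" "b \<in> V" shows "gdist a b = gdist b a"
proof -
  have le: "gdist y x \<le> gdist x y" if xy: "x \<in> V" "y \<in> V" for x y
  proof -
    obtain ps where ps: "is_walk deg nb x ps" "walk nb x ps = y" "length ps = gdist x y"
      using shortest_walk xy by blast
    then obtain qs where "is_walk deg nb y qs" "walk nb y qs = x" "length qs = length ps"
      using reverse_walk[OF xy(1) ps(1)] by auto
    then show ?thesis using gdist_walk_le[OF xy(2), of qs] ps by simp
  qed
  show ?thesis using le[OF assms] le[OF assms(2,1)] by simp
qed

lemma gdist_self: "a \<in> V \<Longrightarrow> gdist a a = 0"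
  using gdist_walk_le[of a "[]"] by simp

lemma finite_gdists: "finite {gdist u v | u v. u \<in> V \<and> v \<in> V}"
proof -
  have "{gdist u v | u v. u \<in> V \<and> v \<in> V} \<subseteq> (\<lambda>(u, v). gdist u v) ` (V \<times> V)" by auto
  then show ?thesis using finite_V by (meson finite_SigmaI finite_imageI finite_subset)
qed

lemma gdist_le_diam: "a \<in> V \<Longrightarrow> b \<in> V \<Longrightarrow> gdist a b \<le> pg_diam V deg nb"
  unfolding pg_diam_def using finite_gdists by (rule Max_ge) blast

lemma diam_attained: "V \<noteq> {} \<Longrightarrow> \<exists>a\<in>V. \<exists>b\<in>V. gdist a b = pg_diam V deg nb"
  unfolding pg_diam_def using Max_in[OF finite_gdists] by fastforce

lemma geodesic_walk:
  assumes c: "c \<in> V" and w: "w \<in> V"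
  shows "\<exists>ps. is_walk deg nb c ps \<and> length ps = gdist c w \<and>
     (\<forall>i\<le>length ps. gdist c (walk nb c (take i ps)) = i)"
proof -
  obtain ps where ps: "is_walk deg nb c ps" "walk nb c ps = w" "length ps = gdist c w"
    using shortest_walk[OF c w] by blast
  have "gdist c (walk nb c (take i ps)) = i" if i: "i \<le> length ps" for i
  proof -
    let ?x = "walk nb c (take i ps)"
    have walks: "is_walk deg nb c (take i ps)" "is_walk deg nb ?x (drop i ps)"
      using ps(1) is_walk_append[of deg nb c "take i ps" "drop i ps"] by simp_all
    have x: "?x \<in> V" using walk_in_V[OF c walks(1)] .
    have "gdist c ?x \<le> i" using gdist_walk_le[OF c walks(1)] i by simp
    moreover have "gdist ?x w \<le> length ps - i"
      using gdist_walk_le[OF x walks(2)] ps(2) walk_append[of nb c "take i ps" "drop i ps"] by simp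
    moreover have "gdist c w \<le> gdist c ?x + gdist ?x w" using gdist_triangle[OF c x w] .
    ultimately show ?thesis using ps(3) i by linarith
  qed
  then show ?thesis using ps by blast
qed

text \<open>A geodesic of length s leaves every node: one of the two ends of a diametral pair is at
  distance at least half the diameter.\<close>

lemma long_geodesic_from:
  assumes c: "c \<in> V" and s: "2 * s \<le> pg_diam V deg nb"
  shows "\<exists>ps. is_walk deg nb c ps \<and> s \<le> length ps \<and> (\<forall>i\<le>s. gdist c (walk nb c (take i ps)) = i)"
proof -
  obtain a b where ab: "a \<in> V" "b \<in> V" "gdist a b = pg_diam V deg nb"
    using diam_attained c by blast
  have "gdist a b \<le> gdist c a + gdist c b"
    using gdist_triangle[OF ab(1) c ab(2)] gdist_sym[OF ab(1) c] by simp
  then have "s \<le> gdist c a \<or> s \<le> gdist c b" using ab(3) s by linarith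
  then obtain w where w: "w \<in> V" "s \<le> gdist c w" using ab by blast
  then show ?thesis using geodesic_walk[OF c w(1)] by fastforce
qed

lemma maximal_separated_set:
  "\<exists>S\<subseteq>V. (\<forall>a\<in>S. \<forall>b\<in>S. a \<noteq> b \<longrightarrow> r < gdist a b) \<and> (\<forall>u\<in>V. \<exists>c\<in>S. gdist u c \<le> r)"
proof -
  define F where "F = {S. S \<subseteq> V \<and> (\<forall>a\<in>S. \<forall>b\<in>S. a \<noteq> b \<longrightarrow> r < gdist a b)}"
  have "finite F" unfolding F_def using finite_V by simp
  moreover have "{} \<in> F" unfolding F_def by blast
  ultimately obtain S where S: "S \<in> F" and maximal: "\<forall>T\<in>F. S \<subseteq> T \<longrightarrow> S = T"
    using finite_has_maximal by (metis empty_iff)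
  have SV: "S \<subseteq> V" and sep: "\<forall>a\<in>S. \<forall>b\<in>S. a \<noteq> b \<longrightarrow> r < gdist a b"
    using S unfolding F_def by blast+
  have "\<exists>c\<in>S. gdist u c \<le> r" if u: "u \<in> V" for u
  proof (rule ccontr)
    assume "\<not> ?thesis"
    then have far: "\<forall>c\<in>S. r < gdist u c \<and> r < gdist c u"
      using gdist_sym[OF u] SV by (metis not_le subsetD)
    then have "u \<notin> S" using gdist_self[OF u] by force
    moreover have "insert u S \<in> F" using far sep SV u unfolding F_def by auto
    ultimately show False using maximal by blast
  qed
  then show ?thesis using SV sep by blast
qed

end

text \<open>Views are encoded as natural numbers: a view node records the advice string and the
  degree of its root and, for every port p, the port at the neighbour leading back and the
  neighbour's view of one less depth.\<close>

definition view_node :: "bool list \<Rightarrow> nat \<Rightarrow> (nat \<times> nat) list \<Rightarrow> nat" where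
  "view_node a d cs = to_nat (a, d, cs)"

definition view_fields :: "nat \<Rightarrow> bool list \<times> nat \<times> (nat \<times> nat) list" where
  "view_fields w = from_nat w"

definition view_adv :: "nat \<Rightarrow> bool list" where "view_adv w = fst (view_fields w)"
definition view_deg :: "nat \<Rightarrow> nat" where "view_deg w = fst (snd (view_fields w))"
definition view_children :: "nat \<Rightarrow> (nat \<times> nat) list" where "view_children w = snd (snd (view_fields w))"

lemma view_node_fields [simp]:
  "view_adv (view_node a d cs) = a" "view_deg (view_node a d cs) = d"
  "view_children (view_node a d cs) = cs"
  unfolding view_adv_def view_deg_def view_children_def view_fields_def view_node_def by simp_all

lemma view_node_eq_iff [simp]: "view_node a d cs = view_node a' d' cs' \<longleftrightarrow> a = a' \<and> d = d' \<and> cs = cs'"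
  unfolding view_node_def by simp

fun view :: "(nat \<Rightarrow> nat) \<Rightarrow> (nat \<Rightarrow> nat \<Rightarrow> nat) \<Rightarrow> (nat \<Rightarrow> bool list) \<Rightarrow> nat \<Rightarrow> nat \<Rightarrow> nat" where
  "view deg nb adv 0 u = view_node (adv u) (deg u) []"
| "view deg nb adv (Suc t) u = view_node (adv u) (deg u)
      (map (\<lambda>p. (back_port deg nb u p, view deg nb adv t (nb u p))) [0..<deg u])"

lemma view_adv_view [simp]: "view_adv (view deg nb adv t u) = adv u"
  by (cases t) auto

lemma view_deg_view [simp]: "view_deg (view deg nb adv t u) = deg u"
  by (cases t) auto

lemma view_Suc_eqD:
  assumes "view deg nb adv (Suc t) u = view deg nb adv (Suc t) u'" "p < deg u"
  shows "deg u = deg u' \<and> back_port deg nb u p = back_port deg nb u' p \<and>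
         view deg nb adv t (nb u p) = view deg nb adv t (nb u' p)"
proof -
  have "deg u = deg u'" using assms(1) by simp
  moreover have "\<forall>x\<in>{0..<deg u}. back_port deg nb u x = back_port deg nb u' x \<and>
      view deg nb adv t (nb u x) = view deg nb adv t (nb u' x)"
    using assms(1) calculation by simp
  ultimately show ?thesis using assms(2) by simp
qed

fun truncate_view :: "nat \<Rightarrow> nat \<Rightarrow> nat" where
  "truncate_view 0 w = view_node (view_adv w) (view_deg w) []"
| "truncate_view (Suc j) w =
     view_node (view_adv w) (view_deg w) (map (\<lambda>(q, x). (q, truncate_view j x)) (view_children w))"

fun subview :: "nat list \<Rightarrow> nat \<Rightarrow> nat" where
  "subview [] w = w"
| "subview (p # ps) w = subview ps (snd (view_children w ! p))"

fun is_view_walk :: "nat list \<Rightarrow> nat \<Rightarrow> bool" where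
  "is_view_walk [] w = True"
| "is_view_walk (p # ps) w = (p < length (view_children w) \<and> is_view_walk ps (snd (view_children w ! p)))"

lemma truncate_view_view: "j \<le> t \<Longrightarrow> truncate_view j (view deg nb adv t u) = view deg nb adv j u"
proof (induction j arbitrary: t u)
  case (Suc j)
  then obtain t' where "t = Suc t'" "j \<le> t'" by (cases t) auto
  then show ?case using Suc.IH by (simp add: o_def)
qed simp

lemma view_eq_mono:
  "view deg nb adv t u = view deg nb adv t u' \<Longrightarrow> j \<le> t \<Longrightarrow> view deg nb adv j u = view deg nb adv j u'"
  by (metis truncate_view_view)

lemma subview_view:
  "length ps \<le> t \<Longrightarrow>
   is_view_walk ps (view deg nb adv t u) = is_walk deg nb u ps \<and>
   (is_walk deg nb u ps \<longrightarrow> subview ps (view deg nb adv t u) = view deg nb adv (t - length ps) (walk nb u ps))"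
proof (induction ps arbitrary: t u)
  case (Cons p ps)
  then obtain t' where "t = Suc t'" "length ps \<le> t'" by (cases t) auto
  then show ?case using Cons.IH[of t' "nb u p"] by (cases "p < deg u") simp_all
qed simp

lemma view_eq_along_walk:
  assumes "view deg nb adv t u = view deg nb adv t u'" "is_walk deg nb u ps" "length ps \<le> t"
  shows "is_walk deg nb u' ps \<and>
    view deg nb adv (t - length ps) (walk nb u ps) = view deg nb adv (t - length ps) (walk nb u' ps)"
  using subview_view[OF assms(3), of deg nb adv u] subview_view[OF assms(3), of deg nb adv u'] assms
  by metis

lemma truncate_subview_view:
  assumes "is_walk deg nb u ps" "length ps + j \<le> t"
  shows "truncate_view j (subview ps (view deg nb adv t u)) = view deg nb adv j (walk nb u ps)"
  using subview_view[of ps t deg nb adv u] truncate_view_view[of j "t - length ps"] assms by simp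

lemma truncate_child_subview_view:
  assumes "is_walk deg nb u ps" "length ps + j < t" "p < deg (walk nb u ps)"
  shows "truncate_view j (snd (view_children (subview ps (view deg nb adv t u)) ! p))
    = view deg nb adv j (nb (walk nb u ps) p)"
proof -
  obtain t' where t': "t - length ps = Suc t'" "j \<le> t'" using assms(2) by (cases "t - length ps") auto
  then have "subview ps (view deg nb adv t u) = view deg nb adv (Suc t') (walk nb u ps)"
    using subview_view[of ps t deg nb adv u] assms by simp
  then show ?thesis using assms(3) truncate_view_view[OF t'(2)] by simp
qed

text \<open>The full-information algorithm: the state after t rounds is the pair (t, view of depth t);
  every message is the sender's view tagged with the port through which it arrives.
  In round T a node outputs the graph read off from its view (labels are views of depth K,
  nodes are the ends of walks of length at most D) and its own label.\<close>

definition state :: "nat \<Rightarrow> nat \<Rightarrow> nat" where "state t w = to_nat (t, w)"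
definition state_round :: "nat \<Rightarrow> nat" where "state_round x = fst (from_nat x :: nat \<times> nat)"
definition state_view :: "nat \<Rightarrow> nat" where "state_view x = snd (from_nat x :: nat \<times> nat)"

lemma state_fields [simp]: "state_round (state t w) = t" "state_view (state t w) = w"
  by (simp_all add: state_round_def state_view_def state_def)

definition view_walks :: "nat \<Rightarrow> nat \<Rightarrow> nat list set" where
  "view_walks D w = {ps. is_view_walk ps w \<and> length ps \<le> D}"

definition decode_graph :: "nat \<Rightarrow> nat \<Rightarrow> nat \<Rightarrow> pgraph" where
  "decode_graph D K w =
     ((\<lambda>ps. truncate_view K (subview ps w)) ` view_walks D w, view_deg,
      \<lambda>x p. truncate_view K (snd (view_children
        (subview (SOME ps. ps \<in> view_walks D w \<and> truncate_view K (subview ps w) = x) w) ! p)))"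

definition full_info_alg :: "nat \<Rightarrow> nat \<Rightarrow> nat \<Rightarrow> algorithm" where
  "full_info_alg T D K = \<lparr>
     init = (\<lambda>d a. state 0 (view_node a d [])),
     send = (\<lambda>x q. to_nat (q, state_view x)),
     trans = (\<lambda>x ms. state (Suc (state_round x))
        (view_node (view_adv (state_view x)) (view_deg (state_view x)) (map (\<lambda>m. from_nat m) ms))),
     outp = (\<lambda>x. if state_round x = T
        then Some (decode_graph D K (state_view x), truncate_view K (state_view x)) else None) \<rparr>"

lemma run_full_info_alg: "run (full_info_alg T D K) deg nb adv t v = state t (view deg nb adv t v)"
  by (induction t arbitrary: v) (simp_all add: full_info_alg_def o_def)

lemma outp_full_info_alg_state: "outp (full_info_alg T D K) (state t w) \<noteq> None \<longleftrightarrow> t = T"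
  by (simp add: full_info_alg_def del: not_None_eq)

lemma out_time_full_info_alg: "out_time (full_info_alg T D K) deg nb adv v = T"
  unfolding out_time_def run_full_info_alg outp_full_info_alg_state by (rule Least_equality) auto

lemma final_out_full_info_alg:
  "final_out (full_info_alg T D K) deg nb adv v =
     (decode_graph D K (view deg nb adv T v), truncate_view K (view deg nb adv T v))"
  unfolding final_out_def out_time_full_info_alg run_full_info_alg by (simp add: full_info_alg_def)

lemma view_walks_view:
  "D \<le> t \<Longrightarrow> ps \<in> view_walks D (view deg nb adv t v) \<longleftrightarrow> is_walk deg nb v ps \<and> length ps \<le> D"
  unfolding view_walks_def using subview_view[of ps t deg nb adv v] by auto

context connected_port_graph
begin

lemma view_eq_walk_end_eq:
  "view deg nb adv t u = view deg nb adv t u' \<Longrightarrow> u \<in> V \<Longrightarrow> u' \<in> V \<Longrightarrow> is_walk deg nb u ps \<Longrightarrow>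
   length ps \<le> t \<Longrightarrow> walk nb u ps = walk nb u' ps \<Longrightarrow> u = u'"
proof (induction ps arbitrary: t u u')
  case (Cons p ps)
  then obtain t' where t: "t = Suc t'" "length ps \<le> t'" by (cases t) auto
  have p: "p < deg u" using Cons.prems by simp
  have eq: "deg u = deg u'" "back_port deg nb u p = back_port deg nb u' p"
     "view deg nb adv t' (nb u p) = view deg nb adv t' (nb u' p)"
    using view_Suc_eqD[of deg nb adv t' u u' p] Cons.prems(1) t p by auto
  have "nb u p = nb u' p"
    using Cons.IH[OF eq(3) nb_in_V[OF Cons.prems(2) p] nb_in_V[OF Cons.prems(3)] _ t(2)] Cons.prems p eq(1)
    by simp
  have "u = nb (nb u p) (back_port deg nb u p)" using back_port[OF Cons.prems(2) p] by simp
  also have "\<dots> = nb (nb u' p) (back_port deg nb u' p)" using \<open>nb u p = nb u' p\<close> eq(2) by simp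
  also have "\<dots> = u'" using back_port[OF Cons.prems(3)] p eq(1) by simp
  finally show ?case .
qed simp

definition view_graph :: "(nat \<Rightarrow> bool list) \<Rightarrow> nat \<Rightarrow> pgraph" where
  "view_graph adv K = (view deg nb adv K ` V, view_deg,
     \<lambda>x p. view deg nb adv K (nb (the_inv_into V (view deg nb adv K) x) p))"

lemma view_graph_iso:
  "inj_on (view deg nb adv K) V \<Longrightarrow> pg_iso V deg nb (view_graph adv K) (view deg nb adv K)"
  unfolding pg_iso_def view_graph_def by (simp add: bij_betw_def the_inv_into_f_f)

lemma decode_graph_view:
  assumes inj: "inj_on (view deg nb adv K) V" and v: "v \<in> V" and diam: "pg_diam V deg nb \<le> D"
  shows "pg_same (decode_graph D K (view deg nb adv (D + Suc K) v)) (view_graph adv K)"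
proof -
  let ?f = "view deg nb adv K" and ?W = "view deg nb adv (D + Suc K) v"
  let ?P = "view_walks D ?W" and ?label = "\<lambda>ps. truncate_view K (subview ps ?W)"
  have walks: "ps \<in> ?P \<longleftrightarrow> is_walk deg nb v ps \<and> length ps \<le> D" for ps
    by (rule view_walks_view) simp
  have label: "?label ps = ?f (walk nb v ps)" if "ps \<in> ?P" for ps
  proof -
    have "is_walk deg nb v ps" "length ps + K \<le> D + Suc K" using that walks by auto
    then show ?thesis by (rule truncate_subview_view)
  qed
  have reach: "\<exists>ps\<in>?P. walk nb v ps = u" if u: "u \<in> V" for u
  proof -
    obtain ps where "is_walk deg nb v ps" "walk nb v ps = u" "length ps = gdist v u"
      using shortest_walk[OF v u] by blast
    then show ?thesis using gdist_le_diam[OF v u] diam walks by fastforce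
  qed
  have nodes: "?label ` ?P = ?f ` V"
  proof
    show "?label ` ?P \<subseteq> ?f ` V" using label walks walk_in_V[OF v] by auto
    show "?f ` V \<subseteq> ?label ` ?P"
    proof
      fix x assume "x \<in> ?f ` V"
      then obtain u ps where "x = ?f u" "ps \<in> ?P" "walk nb v ps = u" using reach by blast
      then show "x \<in> ?label ` ?P" using label by (intro image_eqI[of _ _ ps]) simp_all
    qed
  qed
  have nbs: "truncate_view K (snd (view_children (subview (SOME ps. ps \<in> ?P \<and> ?label ps = ?f u) ?W) ! p))
      = ?f (nb u p)" if u: "u \<in> V" "p < deg u" for u p
  proof -
    let ?ps = "SOME ps. ps \<in> ?P \<and> ?label ps = ?f u"
    have "\<exists>ps. ps \<in> ?P \<and> ?label ps = ?f u" using reach[OF u(1)] label by blast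
    then have ps: "?ps \<in> ?P \<and> ?label ?ps = ?f u" by (rule someI_ex)
    then have "walk nb v ?ps \<in> V" "?f (walk nb v ?ps) = ?f u"
      using label walks walk_in_V[OF v] by auto
    then have walk_eq: "walk nb v ?ps = u" using inj_onD[OF inj] u(1) by blast
    have "is_walk deg nb v ?ps" "length ?ps + K < D + Suc K" "p < deg (walk nb v ?ps)"
      using ps walks u(2) walk_eq by auto
    from truncate_child_subview_view[OF this] show ?thesis by (simp only: walk_eq)
  qed
  show ?thesis unfolding pg_same_def decode_graph_def view_graph_def
    using nodes nbs inj by (auto simp: the_inv_into_f_f)
qed

lemma solves_ltr_if_views_inj:
  assumes inj: "inj_on (view deg nb adv K) V" and diam: "pg_diam V deg nb \<le> D"
  shows "solves_ltr_within (full_info_alg (D + Suc K) D K) V deg nb adv (D + Suc K)"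
proof -
  let ?A = "full_info_alg (D + Suc K) D K"
  have "outp ?A (run ?A deg nb adv (D + Suc K) v) \<noteq> None" for v
    unfolding run_full_info_alg outp_full_info_alg_state ..
  moreover have "pg_same (fst (final_out ?A deg nb adv v)) (view_graph adv K)" if "v \<in> V" for v
    using decode_graph_view[OF inj that diam] by (simp only: final_out_full_info_alg fst_conv)
  moreover have "snd (final_out ?A deg nb adv v) = view deg nb adv K v" for v
    by (simp only: final_out_full_info_alg snd_conv truncate_view_view le_add2)
  ultimately show ?thesis unfolding solves_ltr_within_def using view_graph_iso[OF inj] by fastforce
qed

end

locale path_marking = connected_port_graph +
  fixes s m :: nat and S :: "nat set" and geo :: "nat \<Rightarrow> nat list" and ident :: "nat \<Rightarrow> bool list"
  assumes centers_in_V: "S \<subseteq> V"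
    and centers_separated: "\<And>a b. a \<in> S \<Longrightarrow> b \<in> S \<Longrightarrow> a \<noteq> b \<Longrightarrow> 2 * s < gdist a b"
    and centers_cover: "\<And>u. u \<in> V \<Longrightarrow> \<exists>c\<in>S. gdist u c \<le> 2 * s"
    and geo_walk: "\<And>c. c \<in> S \<Longrightarrow> is_walk deg nb c (geo c) \<and> s \<le> length (geo c)"
    and geo_geodesic: "\<And>c i. c \<in> S \<Longrightarrow> i \<le> s \<Longrightarrow> gdist c (walk nb c (take i (geo c))) = i"
    and ident_inj: "inj_on ident V"
    and ident_length: "\<And>u. u \<in> V \<Longrightarrow> length (ident u) = Suc s * m"
begin

definition marked_node :: "nat \<Rightarrow> nat \<Rightarrow> nat" where
  "marked_node c i = walk nb c (take i (geo c))"

text \<open>The leading bit makes the advice of marked nodes non-empty; the second flags centres.\<close>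

definition header :: "nat \<Rightarrow> bool list" where
  "header i = [True, i = 0, i mod 3 = 1, i mod 3 = 2]"

definition ident_chunk :: "nat \<Rightarrow> nat \<Rightarrow> bool list" where
  "ident_chunk c i = take m (drop (i * m) (ident c))"

definition owner :: "nat \<Rightarrow> nat \<times> nat" where
  "owner w = (SOME ci. fst ci \<in> S \<and> snd ci \<le> s \<and> marked_node (fst ci) (snd ci) = w)"

definition advice :: "nat \<Rightarrow> bool list" where
  "advice w = (if \<exists>c\<in>S. \<exists>i\<le>s. marked_node c i = w
     then header (snd (owner w)) @ ident_chunk (fst (owner w)) (snd (owner w)) else [])"

lemma advice_length: "length (advice w) \<le> m + 4"
  unfolding advice_def header_def ident_chunk_def by auto

lemma marked_node_0 [simp]: "marked_node c 0 = c"
  unfolding marked_node_def by simp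

lemma marked_node_in_V: "c \<in> S \<Longrightarrow> i \<le> s \<Longrightarrow> marked_node c i \<in> V"
  unfolding marked_node_def using geo_walk centers_in_V walk_in_V is_walk_take by blast

lemma gdist_marked_node: "c \<in> S \<Longrightarrow> i \<le> s \<Longrightarrow> gdist c (marked_node c i) = i"
  unfolding marked_node_def by (rule geo_geodesic)

lemma marked_node_unique:
  assumes c: "c \<in> S" and c': "c' \<in> S" and i: "i \<le> s" and i': "i' \<le> s"
    and eq: "marked_node c i = marked_node c' i'"
  shows "c = c' \<and> i = i'"
proof -
  let ?w = "marked_node c i"
  have cV: "c \<in> V" "c' \<in> V" using c c' centers_in_V by auto
  have w: "?w \<in> V" using marked_node_in_V[OF c i] .
  have dw: "gdist c ?w = i" using gdist_marked_node[OF c i] .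
  have dw': "gdist c' ?w = i'" using gdist_marked_node[OF c' i'] eq by simp
  then have "gdist c c' \<le> 2 * s"
    using gdist_triangle[OF cV(1) w cV(2)] gdist_sym[OF w cV(2)] dw i i' by linarith
  then have "c = c'" using centers_separated[OF c c'] by (meson not_le)
  then show ?thesis using dw dw' by simp
qed

lemma advice_marked_node:
  assumes "c \<in> S" "i \<le> s"
  shows "advice (marked_node c i) = header i @ ident_chunk c i"
proof -
  let ?P = "\<lambda>ci. fst ci \<in> S \<and> snd ci \<le> s \<and> marked_node (fst ci) (snd ci) = marked_node c i"
  have "?P (c, i)" using assms by simp
  then have "?P (owner (marked_node c i))" unfolding owner_def by (rule someI)
  then have "fst (owner (marked_node c i)) = c \<and> snd (owner (marked_node c i)) = i"
    using marked_node_unique[of "fst (owner (marked_node c i))" c "snd (owner (marked_node c i))" i] assms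
    by blast
  then have "owner (marked_node c i) = (c, i)" by (simp add: prod_eq_iff)
  moreover have "\<exists>c'\<in>S. \<exists>i'\<le>s. marked_node c' i' = marked_node c i" using assms by blast
  ultimately show ?thesis unfolding advice_def by simp
qed

lemma advice_nonempty:
  assumes "advice w \<noteq> []"
  obtains c i where "c \<in> S" "i \<le> s" "marked_node c i = w" "advice w = header i @ ident_chunk c i"
proof -
  obtain c i where "c \<in> S" "i \<le> s" "marked_node c i = w"
    using assms unfolding advice_def by (auto split: if_splits)
  then show ?thesis using that advice_marked_node by blast
qed

lemma header_append_eq:
  assumes "header i @ x = header j @ y"
  shows "i mod 3 = j mod 3 \<and> (i = 0 \<longleftrightarrow> j = 0) \<and> x = y"
proof -
  have eq: "i = 0 \<longleftrightarrow> j = 0" "i mod 3 = 1 \<longleftrightarrow> j mod 3 = 1" "i mod 3 = 2 \<longleftrightarrow> j mod 3 = 2" "x = y"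
    using assms unfolding header_def by simp_all
  moreover have "i mod 3 < 3" "j mod 3 < 3" by simp_all
  ultimately have "i mod 3 = j mod 3" by linarith
  with eq show ?thesis by simp
qed

text \<open>A walk from a centre whose i-th node carries the header of index i is that centre's
  marked geodesic: the node reached in step i + 1 is marked by the same centre (by separation)
  with an index within one of i + 1, and the counter modulo 3 pins it down.\<close>

lemma walk_with_headers_is_marked_path:
  assumes c: "c \<in> S" and len: "s \<le> length ps"
    and walks: "\<And>i. i \<le> s \<Longrightarrow> is_walk deg nb c (take i ps)"
    and headers: "\<And>i. i \<le> s \<Longrightarrow> \<exists>x. advice (walk nb c (take i ps)) = header i @ x"
  shows "i \<le> s \<Longrightarrow> walk nb c (take i ps) = marked_node c i"
proof (induction i)
  case (Suc i)
  let ?x = "walk nb c (take i ps)" and ?y = "walk nb c (take (Suc i) ps)"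
  have cV: "c \<in> V" using c centers_in_V by blast
  have x: "?x = marked_node c i" using Suc by simp
  have y_walk: "is_walk deg nb c (take (Suc i) ps)" using walks Suc.prems .
  have step: "is_walk deg nb ?x [ps ! i]" "?y = walk nb ?x [ps ! i]"
    using y_walk len Suc.prems by (simp_all add: take_Suc_conv_app_nth)
  have xV: "?x \<in> V" and yV: "?y \<in> V"
    using walk_in_V[OF cV] walks Suc.prems y_walk by auto
  obtain x where "advice ?y = header (Suc i) @ x" using headers Suc.prems by blast
  moreover from this have "advice ?y \<noteq> []" by (simp add: header_def)
  then obtain c' j where c': "c' \<in> S" "j \<le> s" "marked_node c' j = ?y"
      "advice ?y = header j @ ident_chunk c' j"
    by (rule advice_nonempty)
  ultimately have "header j @ ident_chunk c' j = header (Suc i) @ x" by simp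
  then have j_mod: "j mod 3 = Suc i mod 3" using header_append_eq by blast
  have dy: "gdist c ?y \<le> Suc i"
    using gdist_walk_le[OF cV y_walk] len Suc.prems by simp
  have c'V: "c' \<in> V" using c' centers_in_V by blast
  have "gdist ?y c' = j" using gdist_marked_node[OF c'(1,2)] c'(3) gdist_sym[OF yV c'V] by simp
  then have "gdist c c' \<le> 2 * s" using gdist_triangle[OF cV yV c'V] dy Suc.prems c'(2) by linarith
  then have "c' = c" using centers_separated[OF c c'(1)] by fastforce
  then have dj: "gdist c ?y = j" using gdist_marked_node[OF c'(1,2)] c'(3) by simp
  have "gdist ?y ?x \<le> 1" using gdist_walk_le[OF xV step(1)] step(2) gdist_sym[OF xV yV] by simp
  moreover have "gdist c ?x = i" using x gdist_marked_node[OF c] Suc.prems by simp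
  ultimately have "i \<le> j + 1" using gdist_triangle[OF cV yV xV] dj by linarith
  moreover have "j \<le> Suc i" using dj dy by simp
  ultimately have "j = Suc i" using j_mod by presburger
  then show ?case using c' \<open>c' = c\<close> by simp
qed simp

text \<open>The depth-s view of a centre determines the centre: any node with the same view is a
  centre, its walk along the other centre's geodesic is its own marked geodesic, and both
  geodesics spell out the same identifier.\<close>

lemma view_of_center_determines:
  assumes c: "c \<in> S" and c': "c' \<in> V" and eq: "view deg nb advice s c = view deg nb advice s c'"
  shows "c' = c"
proof -
  let ?ps = "geo c"
  have along: "is_walk deg nb c' (take i ?ps) \<and>
      advice (walk nb c' (take i ?ps)) = header i @ ident_chunk c i" if i: "i \<le> s" for i
  proof -
    have walk: "is_walk deg nb c (take i ?ps)" "length (take i ?ps) = i"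
      using geo_walk[OF c] is_walk_take i by auto
    then have "is_walk deg nb c' (take i ?ps) \<and> view deg nb advice (s - i) (marked_node c i)
        = view deg nb advice (s - i) (walk nb c' (take i ?ps))"
      using view_eq_along_walk[OF eq walk(1)] i unfolding marked_node_def by simp
    then show ?thesis using advice_marked_node[OF c i] by (metis view_adv_view)
  qed
  have "c' \<in> S"
  proof -
    have "advice c' = header 0 @ ident_chunk c 0" using along[of 0] by simp
    moreover from this have "advice c' \<noteq> []" by (simp add: header_def)
    then obtain c'' j where c'': "c'' \<in> S" "j \<le> s" "marked_node c'' j = c'"
        "advice c' = header j @ ident_chunk c'' j"
      by (rule advice_nonempty)
    ultimately have "header j @ ident_chunk c'' j = header 0 @ ident_chunk c 0" by simp
    then have "j = 0" using header_append_eq by blast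
    then show ?thesis using c'' by simp
  qed
  then have "walk nb c' (take i ?ps) = marked_node c' i" if "i \<le> s" for i
    using walk_with_headers_is_marked_path[of c' ?ps] along geo_walk[OF c] that by blast
  then have "ident_chunk c' i = ident_chunk c i" if "i \<le> s" for i
    using advice_marked_node[OF \<open>c' \<in> S\<close> that] along[OF that] that by simp
  then have "ident c' = ident c"
    using list_eq_by_chunks[of "ident c'" s m "ident c"] ident_length c' c centers_in_V
    unfolding ident_chunk_def by blast
  then show ?thesis using ident_inj c' c centers_in_V by (meson inj_onD subsetD)
qed

lemma inj_on_view:
  assumes "3 * s \<le> K"
  shows "inj_on (view deg nb advice K) V"
proof (rule inj_onI)
  fix u u' assume u: "u \<in> V" and u': "u' \<in> V" and eq: "view deg nb advice K u = view deg nb advice K u'"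
  obtain c where c: "c \<in> S" "gdist u c \<le> 2 * s" using centers_cover u by blast
  then have cV: "c \<in> V" using centers_in_V by blast
  obtain ps where ps: "is_walk deg nb u ps" "walk nb u ps = c" "length ps = gdist u c"
    using shortest_walk[OF u cV] by blast
  have len: "length ps \<le> K" "s \<le> K - length ps" using ps c assms by linarith+
  have u'_walk: "is_walk deg nb u' ps"
      "view deg nb advice (K - length ps) c = view deg nb advice (K - length ps) (walk nb u' ps)"
    using view_eq_along_walk[OF eq ps(1) len(1)] ps(2) by auto
  then have "walk nb u' ps = c"
    using view_of_center_determines[OF c(1) walk_in_V[OF u' u'_walk(1)]] view_eq_mono[OF u'_walk(2) len(2)] by simp
  then show "u = u'" using view_eq_walk_end_eq[OF eq u u' ps(1) len(1)] ps(2) by simp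
qed

end

context connected_port_graph
begin

lemma injective_views_advice:
  assumes "3 * s \<le> K" "2 * s \<le> pg_diam V deg nb" "card V \<le> 2 ^ (Suc s * m)"
  shows "\<exists>adv. (\<forall>v. length (adv v) \<le> m + 4) \<and> inj_on (view deg nb adv K) V"
proof -
  obtain S where S: "S \<subseteq> V" "\<forall>a\<in>S. \<forall>b\<in>S. a \<noteq> b \<longrightarrow> 2 * s < gdist a b"
      "\<forall>u\<in>V. \<exists>c\<in>S. gdist u c \<le> 2 * s"
    using maximal_separated_set[of "2 * s"] by auto
  have "\<forall>c\<in>S. \<exists>ps. is_walk deg nb c ps \<and> s \<le> length ps \<and> (\<forall>i\<le>s. gdist c (walk nb c (take i ps)) = i)"
    using long_geodesic_from[OF _ assms(2)] S(1) by blast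
  then obtain geo where geo: "\<forall>c\<in>S. is_walk deg nb c (geo c) \<and> s \<le> length (geo c) \<and>
      (\<forall>i\<le>s. gdist c (walk nb c (take i (geo c))) = i)"
    by metis
  obtain ident :: "nat \<Rightarrow> bool list" where ident: "inj_on ident V" "\<forall>v\<in>V. length (ident v) = Suc s * m"
    using binary_codes_exist[OF finite_V assms(3)] by blast
  interpret path_marking V deg nb s m S geo ident
    using S geo ident by unfold_locales auto
  show ?thesis using advice_length inj_on_view[OF assms(1)] by blast
qed

end

lemma log_bits_bound:
  assumes n: "2 \<le> n"
  shows "\<exists>L. n \<le> 2 ^ L \<and> real L \<le> 2 * log 2 (real n)"
proof -
  define L where "L = nat \<lceil>log 2 (real n)\<rceil>"
  have lg: "1 \<le> log 2 (real n)" using n by simp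
  then have L: "real L = real_of_int \<lceil>log 2 (real n)\<rceil>" unfolding L_def by simp
  then have "real n \<le> 2 powr real L" using n by (subst log_le_iff[symmetric]) auto
  then have "n \<le> 2 ^ L" by (simp add: powr_realpow flip: of_nat_le_iff)
  moreover have "real L \<le> 2 * log 2 (real n)" using L lg by linarith
  ultimately show ?thesis by blast
qed

text \<open>With s = (k - 1) div 3, an identifier of L bits cut into s + 1 chunks needs chunks of
  m = \<open>\<lceil>L / (s + 1)\<rceil>\<close> bits, and s + 1 \<ge> k / 3.\<close>

lemma chunk_count_bound:
  fixes k L :: nat
  assumes k: "0 < k"
  defines "s \<equiv> (k - 1) div 3"
  defines "m \<equiv> (L + s) div Suc s"
  shows "L \<le> Suc s * m" and "m * k \<le> 3 * L + k"
proof -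
  have e: "m * Suc s + (L + s) mod Suc s = L + s" unfolding m_def by (rule div_mult_mod_eq)
  moreover have "(L + s) mod Suc s \<le> s" using mod_less_divisor[of "Suc s" "L + s"] by simp
  ultimately have "L \<le> m * Suc s" by linarith
  then show "L \<le> Suc s * m" by (simp only: mult.commute)
  have ks: "k \<le> 3 * Suc s" "3 * s \<le> k - 1" unfolding s_def using k by auto
  have "m * k \<le> m * (3 * Suc s)" using ks by simp
  also have "\<dots> = 3 * (m * Suc s)" by (simp add: algebra_simps)
  also have "\<dots> \<le> 3 * L + 3 * s" using e by linarith
  also have "\<dots> \<le> 3 * L + k" using ks by simp
  finally show "m * k \<le> 3 * L + k" .
qed

lemma chunk_size_exists:
  assumes n: "2 \<le> n" and k: "0 < k"
  shows "\<exists>m. n \<le> 2 ^ (Suc ((k - 1) div 3) * m) \<and> real m + 4 \<le> 6 * (1 + log 2 (real n) / real k)"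
proof -
  obtain L where L: "n \<le> 2 ^ L" "real L \<le> 2 * log 2 (real n)" using log_bits_bound[OF n] by blast
  define m where "m = (L + (k - 1) div 3) div Suc ((k - 1) div 3)"
  have "L \<le> Suc ((k - 1) div 3) * m" and mk: "m * k \<le> 3 * L + k"
    using chunk_count_bound[OF k, of L] unfolding m_def by auto
  then have "n \<le> 2 ^ (Suc ((k - 1) div 3) * m)"
    using L(1) power_increasing[of L _ "2::nat"] by (meson le_trans one_le_numeral)
  moreover have "real m \<le> 6 * log 2 (real n) / real k + 1"
  proof -
    have kr: "0 < real k" using k by simp
    have "real m * real k \<le> 3 * real L + real k" using mk by (metis of_nat_add of_nat_le_iff of_nat_mult of_nat_numeral)
    then have "real m \<le> 3 * real L / real k + 1" using kr by (simp add: field_simps)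
    also have "\<dots> \<le> 6 * log 2 (real n) / real k + 1" using L(2) kr by (simp add: divide_right_mono)
    finally show ?thesis .
  qed
  ultimately show ?thesis by (intro exI[of _ m]) (simp add: field_simps)
qed

lemma ltr_with_short_advice:
  assumes n: "2 \<le> n" and k: "0 < k" "k \<le> D"
    and G: "port_graph V deg nb" "pg_connected V deg nb" "card V = n" "pg_diam V deg nb = D"
  shows "\<exists>adv. (\<forall>v\<in>V. real (length (adv v)) \<le> 6 * (1 + log 2 (real n) / real k)) \<and>
    solves_ltr_within (full_info_alg (D + k) D (k - 1)) V deg nb adv (D + k)"
proof -
  interpret connected_port_graph V deg nb using G by unfold_locales
  define s where "s = (k - 1) div 3"
  obtain m where m: "n \<le> 2 ^ (Suc s * m)" "real m + 4 \<le> 6 * (1 + log 2 (real n) / real k)"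
    using chunk_size_exists[OF n k(1)] unfolding s_def by blast
  have "3 * s \<le> k - 1" "2 * s \<le> pg_diam V deg nb" "card V \<le> 2 ^ (Suc s * m)"
    using G k m(1) unfolding s_def by auto
  then obtain adv where len: "\<forall>v. length (adv v) \<le> m + 4"
      and inj: "inj_on (view deg nb adv (k - 1)) V"
    using injective_views_advice by blast
  have "D + k = D + Suc (k - 1)" using k by simp
  then have "solves_ltr_within (full_info_alg (D + k) D (k - 1)) V deg nb adv (D + k)"
    using solves_ltr_if_views_inj[OF inj] G by simp
  moreover have "real (length (adv v)) \<le> 6 * (1 + log 2 (real n) / real k)" for v
    using len m(2) by (metis of_nat_add of_nat_le_iff of_nat_numeral order_trans)
  ultimately show ?thesis by blast
qed

theorem theorem4p1:
  "\<exists>C::real. C > 0 \<and>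
     (\<forall>n D k :: nat. n \<ge> 2 \<longrightarrow> D \<ge> 1 \<longrightarrow> 0 < k \<longrightarrow> k \<le> D \<longrightarrow>
        (\<exists>A :: algorithm.
           \<forall>V deg nb. port_graph V deg nb \<and> pg_connected V deg nb \<and> card V = n \<and>
                      pg_diam V deg nb = D \<longrightarrow>
             (\<exists>adv :: nat \<Rightarrow> bool list.
                (\<forall>v\<in>V. real (length (adv v)) \<le> C * (1 + log 2 (real n) / real k)) \<and>
                solves_ltr_within A V deg nb adv (D + k))))"
  using ltr_with_short_advice by (intro exI[of _ 6] conjI) (simp, blast)

end
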